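(* Let $E$ and $E'$ be disjunctive interval multiplicity expressions (DIMEs) over a finite alphabet $\Sigma$. Then $L(E')\subseteq L(E)$ if and only if $\Delta_{E'}\preccurlyeq \Delta_E$.
   Context: Unordered words are functions $w:\Sigma\to\mathbb{N}_0$; $a\in w$ means $w(a)\neq 0$; $\varepsilon$ is the all-zero word; unordered concatenation $\uplus$ is multiset union, extended to languages pointwise. An interval is $[n,m]$ or $[n,m]^?$ with $n\in\mathbb{N}_0$, $m\in\mathbb{N}_0\cup\{\infty\}$; $L(E^{[n,m]})=\{w_1\uplus\dots\uplus w_i\mid n\le i\le m, w_j\in L(E)\}$, $L(E^{[n,m]^?})=L(E^{[n,m]})\cup\{\varepsilon\}$; the multiplicities $*,+,?,1$ denote $[0,\infty],[1,\infty],[0,1],[1,1]$. Also $L(a)=\{a\}$, $L(E_1\mid E_2)=L(E_1)\cup L(E_2)$, $L(E_1\mathbin{|\hspace{-0.1em}|} E_2)=L(E_1)\uplus L(E_2)$. An atom is $(a_1^{I_1}\mathbin{|\hspace{-0.1em}|}\dots\mathbin{|\hspace{-0.1em}|} a_k^{I_k})$ with $a_i\in\Sigma$ and each $I_i\in\{?,1\}$. A clause is $(A_1^{I_1}\mid\dots\mid A_k^{I_k})$ with atoms $A_i$ and intervals $I_i$; it is simple if each $I_i\in\{?,1\}$. A DIME is $(D_1^{I_1}\mathbin{|\hspace{-0.1em}|}\dots\mathbin{|\hspace{-0.1em}|} D_k^{I_k})$ where for each $i$ either $D_i$ is a simple clause and $I_i\in\{+,*\}$, or $D_i$ is a clause and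 $I_i\in\{1,?\}$; moreover each symbol occurs at most once in the DIME. The characterizing tuple of a DIME $E$ is $\Delta_E=(C_E,N_E,P_E,K_E)$ where $C_E=\{(a,b)\in\Sigma\times\Sigma\mid \neg\exists w\in L(E).\ a\in w\wedge b\in w\}$, $N_E=\{(a,w(a))\mid a\in\Sigma, w\in L(E)\}$, $P_E=\{X\subseteq\Sigma\mid\forall w\in L(E).\ \exists a\in X.\ a\in w\}$, $K_E=\{(a,b)\in\Sigma\times\Sigma\mid\forall w\in L(E).\ w(a)\ge w(b)\}$. We write $\Delta_{E'}\preccurlyeq\Delta_E$ if $C_E\subseteq C_{E'}$, $N_{E'}\subseteq N_E$, $P_E\subseteq P_{E'}$ and $K_E\subseteq K_{E'}$. *)

theory Defs
  imports Main "HOL-Library.Multiset" "HOL-Library.Extended_Nat"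
begin

text \<open>Unordered words over the alphabet 'a are finitely supported functions 'a to nat,
  i.e. multisets: w(a) = count w a, a in w iff count w a ~= 0, epsilon = {#},
  unordered concatenation = multiset sum (+).\<close>

type_synonym 'a uword = "'a multiset"

text \<open>Intervals: (n, m, q) stands for [n,m] if q = False and [n,m]^? if q = True;
  m ranges over nat extended with infinity.\<close>
type_synonym interval = "nat \<times> enat \<times> bool"

definition I_star :: interval where "I_star = (0, \<infinity>, False)"
definition I_plus :: interval where "I_plus = (1, \<infinity>, False)"
definition I_opt  :: interval where "I_opt = (0, 1, False)"
definition I_one  :: interval where "I_one = (1, 1, False)"

datatype 'a expr =
    Sym 'a
  | Alt "'a expr list"
  | Par "'a expr list"
  | Rep "'a expr" interval

definition uconc :: "'a uword set \<Rightarrow> 'a uword set \<Rightarrow> 'a uword set" where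
  "uconc L1 L2 = {w1 + w2 | w1 w2. w1 \<in> L1 \<and> w2 \<in> L2}"

definition rep_lang :: "'a uword set \<Rightarrow> interval \<Rightarrow> 'a uword set" where
  "rep_lang L I = (case I of (n, m, q) \<Rightarrow>
     {sum_list ws | ws. n \<le> length ws \<and> enat (length ws) \<le> m \<and> set ws \<subseteq> L}
     \<union> (if q then {{#}} else {}))"

fun lang :: "'a expr \<Rightarrow> 'a uword set" where
  "lang (Sym a) = {{#a#}}"
| "lang (Alt Es) = (\<Union>E\<in>set Es. lang E)"
| "lang (Par Es) = foldr (\<lambda>E acc. uconc (lang E) acc) Es {{#}}"
| "lang (Rep E I) = rep_lang (lang E) I"

fun syms :: "'a expr \<Rightarrow> 'a list" where
  "syms (Sym a) = [a]"
| "syms (Alt Es) = concat (map syms Es)"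
| "syms (Par Es) = concat (map syms Es)"
| "syms (Rep E I) = syms E"

definition is_atom :: "'a expr \<Rightarrow> bool" where
  "is_atom E \<longleftrightarrow> (\<exists>xs. xs \<noteq> [] \<and> E = Par (map (\<lambda>(a, I). Rep (Sym a) I) xs)
      \<and> (\<forall>(a, I) \<in> set xs. I \<in> {I_opt, I_one}))"

definition is_clause :: "'a expr \<Rightarrow> bool" where
  "is_clause E \<longleftrightarrow> (\<exists>xs. xs \<noteq> [] \<and> E = Alt (map (\<lambda>(A, I). Rep A I) xs)
      \<and> (\<forall>(A, I) \<in> set xs. is_atom A))"

definition is_simple_clause :: "'a expr \<Rightarrow> bool" where
  "is_simple_clause E \<longleftrightarrow> (\<exists>xs. xs \<noteq> [] \<and> E = Alt (map (\<lambda>(A, I). Rep A I) xs)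
      \<and> (\<forall>(A, I) \<in> set xs. is_atom A \<and> I \<in> {I_opt, I_one}))"

definition is_DIME :: "'a expr \<Rightarrow> bool" where
  "is_DIME E \<longleftrightarrow> (\<exists>xs. xs \<noteq> [] \<and> E = Par (map (\<lambda>(D, I). Rep D I) xs)
      \<and> (\<forall>(D, I) \<in> set xs. (is_simple_clause D \<and> I \<in> {I_plus, I_star})
                           \<or> (is_clause D \<and> I \<in> {I_one, I_opt})))
    \<and> distinct (syms E)"

definition C_of :: "'a expr \<Rightarrow> ('a \<times> 'a) set" where
  "C_of E = {(a, b). \<not> (\<exists>w \<in> lang E. a \<in># w \<and> b \<in># w)}"

definition N_of :: "'a expr \<Rightarrow> ('a \<times> nat) set" where
  "N_of E = {(a, count w a) | a w. w \<in> lang E}"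

definition P_of :: "'a expr \<Rightarrow> 'a set set" where
  "P_of E = {X. \<forall>w \<in> lang E. \<exists>a \<in> X. a \<in># w}"

definition K_of :: "'a expr \<Rightarrow> ('a \<times> 'a) set" where
  "K_of E = {(a, b). \<forall>w \<in> lang E. count w a \<ge> count w b}"

definition Delta :: "'a expr \<Rightarrow> ('a \<times> 'a) set \<times> ('a \<times> nat) set \<times> 'a set set \<times> ('a \<times> 'a) set" where
  "Delta E = (C_of E, N_of E, P_of E, K_of E)"

definition delta_le :: "('a \<times> 'a) set \<times> ('a \<times> nat) set \<times> 'a set set \<times> ('a \<times> 'a) set
    \<Rightarrow> ('a \<times> 'a) set \<times> ('a \<times> nat) set \<times> 'a set set \<times> ('a \<times> 'a) set \<Rightarrow> bool" where
  "delta_le D' D = (case D' of (C', N', P', K') \<Rightarrow> case D of (C, N, P, K) \<Rightarrow>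
      C \<subseteq> C' \<and> N' \<subseteq> N \<and> P \<subseteq> P' \<and> K \<subseteq> K')"

end

theory Submission
  imports Defs
begin

text \<open>
  Call a word consistent with a language if it satisfies every constraint recorded in the
  characterizing tuple of the language. Inclusion of languages clearly implies the order on
  tuples, and consistency is inherited along this order; so it suffices that a DIME language
  contains every word consistent with it. Restricting to the symbols of one factor reduces this
  to a single clause, whose atoms are blocks on pairwise disjoint symbol sets: the words of the
  k-th power of an atom have exactly k copies of each mandatory symbol and at most k of the
  others. Under multiplicity 1 or ? the co-occurrence constraints confine a consistent word to
  one block, and the order and multiplicity constraints pin down an admissible exponent; under
  + or * the share of each block splits into single copies of its atom.
\<close>

text \<open>The four conjuncts are the constraints recorded by \<open>C_of\<close>, \<open>N_of\<close>, \<open>P_of\<close> and \<open>K_of\<close>.\<close>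

definition consistent :: "'a uword set \<Rightarrow> 'a uword \<Rightarrow> bool" where
  "consistent L v \<longleftrightarrow>
     (\<forall>a b. a \<in># v \<longrightarrow> b \<in># v \<longrightarrow> (\<exists>u\<in>L. a \<in># u \<and> b \<in># u))
   \<and> (\<forall>a. \<exists>u\<in>L. count u a = count v a)
   \<and> (\<forall>X. (\<forall>u\<in>L. \<exists>a\<in>X. a \<in># u) \<longrightarrow> (\<exists>a\<in>X. a \<in># v))
   \<and> (\<forall>a b. (\<forall>u\<in>L. count u b \<le> count u a) \<longrightarrow> count v b \<le> count v a)"

lemma consistentD:
  assumes "consistent L v"
  shows consistent_cooccur: "a \<in># v \<Longrightarrow> b \<in># v \<Longrightarrow> \<exists>u\<in>L. a \<in># u \<and> b \<in># u"
    and consistent_count: "\<exists>u\<in>L. count u a = count v a"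
    and consistent_hits: "\<forall>u\<in>L. \<exists>a\<in>X. a \<in># u \<Longrightarrow> \<exists>a\<in>X. a \<in># v"
    and consistent_count_le: "\<forall>u\<in>L. count u b \<le> count u a \<Longrightarrow> count v b \<le> count v a"
  using assms unfolding consistent_def by meson+

lemma consistent_symbol:
  assumes "consistent L v" "a \<in># v"
  obtains u where "u \<in> L" "a \<in># u" "count u a = count v a"
  using consistent_count[OF assms(1), of a] assms(2) by (metis count_eq_zero_iff)

lemma consistent_if_mem: "v \<in> L \<Longrightarrow> consistent L v"
  unfolding consistent_def by auto

lemma empty_mem_if_consistent:
  assumes "consistent L {#}"
  shows "{#} \<in> L"
proof (rule ccontr)
  assume "{#} \<notin> L"
  then have "\<forall>u\<in>L. \<exists>a\<in>UNIV. a \<in># u" by (metis UNIV_I multiset_nonemptyE)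
  then show False using consistent_hits[OF assms, of UNIV] by simp
qed

lemma consistent_if_delta_le:
  assumes le: "delta_le (Delta E') (Delta E)" and cons: "consistent (lang E') w"
  shows "consistent (lang E) w"
proof -
  have C: "C_of E \<subseteq> C_of E'" and N: "N_of E' \<subseteq> N_of E" and P: "P_of E \<subseteq> P_of E'"
    and K: "K_of E \<subseteq> K_of E'" using le unfolding delta_le_def Delta_def by auto
  show ?thesis unfolding consistent_def
  proof (intro conjI allI impI)
    fix a b assume "a \<in># w" "b \<in># w"
    then have "(a, b) \<notin> C_of E'"
      using consistent_cooccur[OF cons] unfolding C_of_def by auto
    then show "\<exists>u\<in>lang E. a \<in># u \<and> b \<in># u" using C unfolding C_of_def by auto
  next
    fix a
    obtain u where u: "u \<in> lang E'" "count u a = count w a" using consistent_count[OF cons] by blast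
    have "(a, count u a) \<in> N_of E'" unfolding N_of_def using u(1) by blast
    then have "(a, count w a) \<in> N_of E'" using u(2) by simp
    then obtain b u' where "(a, count w a) = (b, count u' b)" "u' \<in> lang E"
      using N unfolding N_of_def by blast
    then show "\<exists>u\<in>lang E. count u a = count w a" by auto
  next
    fix X assume "\<forall>u\<in>lang E. \<exists>a\<in>X. a \<in># u"
    then have "X \<in> P_of E'" using P unfolding P_of_def by auto
    then show "\<exists>a\<in>X. a \<in># w" using consistent_hits[OF cons] unfolding P_of_def by auto
  next
    fix a b assume "\<forall>u\<in>lang E. count u b \<le> count u a"
    then have "(a, b) \<in> K_of E'" using K unfolding K_of_def by auto
    then show "count w b \<le> count w a" using consistent_count_le[OF cons] unfolding K_of_def by auto
  qed
qed

abbreviation restrict :: "'a set \<Rightarrow> 'a uword \<Rightarrow> 'a uword" where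
  "restrict A u \<equiv> filter_mset (\<lambda>a. a \<in> A) u"

lemma consistent_restrict:
  assumes w: "consistent L w"
    and restrict_mem: "\<And>u. u \<in> L \<Longrightarrow> restrict S u \<in> L'"
    and L'_syms: "\<And>u. u \<in> L' \<Longrightarrow> set_mset u \<subseteq> S"
  shows "consistent L' (restrict S w)"
  unfolding consistent_def
proof (intro conjI allI impI)
  fix a b assume "a \<in># restrict S w" "b \<in># restrict S w"
  then obtain u where "u \<in> L" "a \<in># u" "b \<in># u" "a \<in> S" "b \<in> S"
    using consistent_cooccur[OF w] by auto
  then have "restrict S u \<in> L'" "a \<in># restrict S u" "b \<in># restrict S u"
    using restrict_mem by auto
  then show "\<exists>u\<in>L'. a \<in># u \<and> b \<in># u" by blast
next
  have count_restrict: "\<exists>u\<in>L'. count u a = count (restrict S w) a" for a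
  proof -
    obtain u where "u \<in> L" "count u a = count w a" using consistent_count[OF w] by blast
    then have "restrict S u \<in> L'" "count (restrict S u) a = count (restrict S w) a"
      using restrict_mem by auto
    then show ?thesis by blast
  qed
  fix a show "\<exists>u\<in>L'. count u a = count (restrict S w) a" by (rule count_restrict)
  fix b assume le: "\<forall>u\<in>L'. count u b \<le> count u a"
  show "count (restrict S w) b \<le> count (restrict S w) a"
  proof (cases "a \<in> S \<and> b \<in> S")
    case True
    have "\<forall>u\<in>L. count u b \<le> count u a"
    proof
      fix u assume "u \<in> L"
      then have "count (restrict S u) b \<le> count (restrict S u) a" using le restrict_mem by blast
      then show "count u b \<le> count u a" using True by simp
    qed
    then show ?thesis using consistent_count_le[OF w] True by simp
  next
    case False
    \<comment> \<open>if \<open>a \<notin> S\<close> then \<open>a\<close> never occurs in \<open>L'\<close>, hence neither does \<open>b\<close>\<close>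
    obtain u where u: "u \<in> L'" "count u b = count (restrict S w) b" using count_restrict by blast
    have "count u a = 0" if "a \<notin> S" using L'_syms[OF u(1)] that by (auto simp: count_eq_zero_iff)
    then show ?thesis using le u False by (cases "a \<in> S") auto
  qed
next
  fix X assume hits: "\<forall>u\<in>L'. \<exists>a\<in>X. a \<in># u"
  have "\<forall>u\<in>L. \<exists>a\<in>X \<inter> S. a \<in># u"
  proof
    fix u assume "u \<in> L"
    then obtain a where "a \<in> X" "a \<in># restrict S u" using hits restrict_mem by blast
    then show "\<exists>a\<in>X \<inter> S. a \<in># u" by auto
  qed
  then show "\<exists>a\<in>X. a \<in># restrict S w" using consistent_hits[OF w, of "X \<inter> S"] by auto
qed

lemma lang_Par_Cons: "lang (Par (E # Es)) = uconc (lang E) (lang (Par Es))"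
  by simp

lemma lang_subset_syms: "u \<in> lang E \<Longrightarrow> set_mset u \<subseteq> set (syms E)"
proof (induction E arbitrary: u)
  case (Par Es)
  then show ?case
  proof (induction Es arbitrary: u)
    case (Cons E Es)
    then obtain u1 u2 where "u = u1 + u2" "u1 \<in> lang E" "u2 \<in> lang (Par Es)"
      unfolding lang_Par_Cons uconc_def by blast
    with Cons show ?case by fastforce
  qed simp
next
  case (Rep E I)
  obtain n m q where "I = (n, m, q)" by (cases I)
  with Rep.prems have "u \<in> rep_lang (lang E) (n, m, q)" by simp
  then have "\<exists>ws. u = sum_list ws \<and> set ws \<subseteq> lang E"
    by (cases q) (auto simp: rep_lang_def intro: exI[of _ "[]"])
  then obtain ws where "u = sum_list ws" "set ws \<subseteq> lang E" by blast
  with Rep.IH show ?case by (induction ws arbitrary: u) auto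
qed fastforce+

lemma consistent_subset_syms: "consistent (lang E) w \<Longrightarrow> set_mset w \<subseteq> set (syms E)"
proof
  fix a assume "consistent (lang E) w" "a \<in># w"
  then obtain u where "u \<in> lang E" "a \<in># u" by (rule consistent_symbol)
  then show "a \<in> set (syms E)" using lang_subset_syms by blast
qed

text \<open>\<open>atom_pow M S k\<close> is the language of \<open>A^[k,k]\<close> for an atom \<open>A\<close> with symbols \<open>S\<close>, of which \<open>M\<close> carry multiplicity 1.\<close>

definition atom_pow :: "'a set \<Rightarrow> 'a set \<Rightarrow> nat \<Rightarrow> 'a uword set" where
  "atom_pow M S k = {u. set_mset u \<subseteq> S \<and> (\<forall>a\<in>M. count u a = k) \<and> (\<forall>a. count u a \<le> k)}"

lemma atom_pow_0: "atom_pow M S 0 = {{#}}"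
  unfolding atom_pow_def by (auto intro: multiset_eqI)

lemma sum_list_in_atom_pow:
  "set ws \<subseteq> atom_pow M S 1 \<Longrightarrow> sum_list ws \<in> atom_pow M S (length ws)"
proof (induction ws)
  case (Cons w ws)
  then have w: "w \<in> atom_pow M S 1" and ws: "sum_list ws \<in> atom_pow M S (length ws)" by auto
  have "count w a \<le> 1" "count (sum_list ws) a \<le> length ws" for a
    using w ws unfolding atom_pow_def by auto
  then have "count w a + count (sum_list ws) a \<le> 1 + length ws" for a
    using add_mono by blast
  then show ?case using w ws unfolding atom_pow_def by auto
qed (simp add: atom_pow_0)

lemma atom_pow_split:
  "u \<in> atom_pow M S k \<Longrightarrow> \<exists>ws. length ws = k \<and> set ws \<subseteq> atom_pow M S 1 \<and> sum_list ws = u"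
proof (induction k arbitrary: u)
  case 0
  then show ?case by (auto simp: atom_pow_0)
next
  case (Suc k)
  then have S: "set_mset u \<subseteq> S" and M: "\<forall>a\<in>M. count u a = Suc k"
    and le: "\<forall>a. count u a \<le> Suc k" unfolding atom_pow_def by auto
  \<comment> \<open>peel off one copy of every symbol occurring in \<open>u\<close>\<close>
  define w where "w = mset_set (set_mset u)"
  have count_w: "count w a = (if a \<in># u then 1 else 0)" for a
    unfolding w_def by simp
  have "set_mset w = set_mset u"
    unfolding w_def by simp
  have "w \<subseteq># u" unfolding subseteq_mset_def count_w by (simp add: Suc_leI)
  have M_in_u: "a \<in># u" if "a \<in> M" for a
    using M that by (metis count_eq_zero_iff nat.distinct(1))
  have "w \<in> atom_pow M S 1"
    using S M_in_u unfolding atom_pow_def by (auto simp: count_w \<open>set_mset w = set_mset u\<close>)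
  moreover have "count (u - w) a \<le> k" for a
    using le[rule_format, of a] by (auto simp: count_w not_in_iff)
  then have "u - w \<in> atom_pow M S k"
    using S M M_in_u unfolding atom_pow_def by (auto simp: count_w dest: in_diffD)
  then obtain ws where "length ws = k" "set ws \<subseteq> atom_pow M S 1" "sum_list ws = u - w"
    using Suc.IH by blast
  ultimately show ?case using \<open>w \<subseteq># u\<close> by (intro exI[of _ "w # ws"]) auto
qed

lemma rep_lang_atom_pow:
  "rep_lang (atom_pow M S 1) (n, m, q) =
     (\<Union>k\<in>{k. n \<le> k \<and> enat k \<le> m}. atom_pow M S k) \<union> (if q then {{#}} else {})"
proof -
  have "{sum_list ws |ws. n \<le> length ws \<and> enat (length ws) \<le> m \<and> set ws \<subseteq> atom_pow M S 1}
      = (\<Union>k\<in>{k. n \<le> k \<and> enat k \<le> m}. atom_pow M S k)" (is "?sums = ?pows")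
  proof (intro set_eqI iffI)
    fix u assume "u \<in> ?sums"
    then show "u \<in> ?pows" using sum_list_in_atom_pow by blast
  next
    fix u assume "u \<in> ?pows"
    then obtain k where "n \<le> k" "enat k \<le> m" "u \<in> atom_pow M S k" by blast
    then show "u \<in> ?sums" using atom_pow_split by (metis (mono_tags, lifting) mem_Collect_eq)
  qed
  then show ?thesis unfolding rep_lang_def by simp
qed

lemma enat_le_one_iff: "enat n \<le> 1 \<longleftrightarrow> n \<le> 1"
  by (simp add: one_enat_def)

lemma rep_lang_I_one: "rep_lang L I_one = L"
proof (intro set_eqI iffI)
  fix u assume "u \<in> rep_lang L I_one"
  then obtain ws where "u = sum_list ws" "length ws = 1" "set ws \<subseteq> L"
    unfolding rep_lang_def I_one_def by (auto simp: enat_le_one_iff)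
  then show "u \<in> L" by (auto simp: length_Suc_conv)
next
  fix u assume "u \<in> L"
  then have "u = sum_list [u] \<and> 1 \<le> length [u] \<and> enat (length [u]) \<le> 1 \<and> set [u] \<subseteq> L"
    by (simp add: enat_le_one_iff)
  then show "u \<in> rep_lang L I_one" unfolding rep_lang_def I_one_def by blast
qed

lemma rep_lang_I_opt: "rep_lang L I_opt = insert {#} L"
proof (intro set_eqI iffI)
  fix u assume "u \<in> rep_lang L I_opt"
  then obtain ws where "u = sum_list ws" "length ws \<le> 1" "set ws \<subseteq> L"
    unfolding rep_lang_def I_opt_def by (auto simp: enat_le_one_iff)
  then show "u \<in> insert {#} L" by (cases ws) auto
next
  fix u assume "u \<in> insert {#} L"
  then have "\<exists>ws. u = sum_list ws \<and> length ws \<le> 1 \<and> set ws \<subseteq> L"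
    by (elim insertE) (rule exI[of _ "[]"], simp, rule exI[of _ "[u]"], simp)
  then obtain ws where "u = sum_list ws" "length ws \<le> 1" "set ws \<subseteq> L" by blast
  then show "u \<in> rep_lang L I_opt" unfolding rep_lang_def I_opt_def by (auto simp: enat_le_one_iff)
qed

lemma uconc_single_atom_pow:
  assumes "a \<notin> S" "M \<subseteq> S"
  shows "uconc {{#a#}} (atom_pow M S 1) = atom_pow (insert a M) (insert a S) 1"
proof (intro set_eqI iffI)
  fix u assume "u \<in> uconc {{#a#}} (atom_pow M S 1)"
  then obtain v where "u = add_mset a v" "v \<in> atom_pow M S 1" unfolding uconc_def by auto
  moreover have "count v a = 0" using \<open>v \<in> atom_pow M S 1\<close> assms(1)
    unfolding atom_pow_def by (auto simp: not_in_iff[symmetric])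
  ultimately show "u \<in> atom_pow (insert a M) (insert a S) 1"
    unfolding atom_pow_def by auto
next
  fix u assume u: "u \<in> atom_pow (insert a M) (insert a S) 1"
  then have "count u a = 1" unfolding atom_pow_def by auto
  then have u_eq: "u = add_mset a (u - {#a#})" and "count (u - {#a#}) a = 0"
    by (simp_all add: count_inI)
  have "u - {#a#} \<in> atom_pow M S 1"
    unfolding atom_pow_def
  proof (intro CollectI conjI ballI allI subsetI)
    fix b assume b: "b \<in># u - {#a#}"
    then have "b \<noteq> a" using \<open>count (u - {#a#}) a = 0\<close> by (metis count_eq_zero_iff)
    moreover have "b \<in> insert a S" using b u unfolding atom_pow_def by (auto dest: in_diffD)
    ultimately show "b \<in> S" by simp
  next
    fix b assume "b \<in> M"
    then have "b \<noteq> a" using assms by auto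
    then show "count (u - {#a#}) b = 1" using u \<open>b \<in> M\<close> unfolding atom_pow_def by simp
  next
    fix b
    have "count u b \<le> 1" using u unfolding atom_pow_def by blast
    then show "count (u - {#a#}) b \<le> 1" by simp
  qed
  then show "u \<in> uconc {{#a#}} (atom_pow M S 1)" unfolding uconc_def using u_eq by force
qed

lemma atom_pow_mono: "M' \<subseteq> M \<Longrightarrow> S \<subseteq> S' \<Longrightarrow> atom_pow M S k \<subseteq> atom_pow M' S' k"
  unfolding atom_pow_def by auto

lemma uconc_opt_atom_pow:
  assumes "a \<notin> S" "M \<subseteq> S"
  shows "uconc {{#}, {#a#}} (atom_pow M S 1) = atom_pow M (insert a S) 1"
proof -
  have "uconc {{#}, {#a#}} L = L \<union> uconc {{#a#}} L" for L :: "'a uword set"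
    unfolding uconc_def by (auto, metis add.left_neutral, metis add_mset_add_single add.commute)
  moreover have "atom_pow M (insert a S) 1 = atom_pow M S 1 \<union> atom_pow (insert a M) (insert a S) 1"
  proof (intro equalityI subsetI)
    fix u assume u: "u \<in> atom_pow M (insert a S) 1"
    show "u \<in> atom_pow M S 1 \<union> atom_pow (insert a M) (insert a S) 1"
    proof (cases "a \<in># u")
      case True
      have "count u a \<le> 1" using u unfolding atom_pow_def by blast
      with True have "count u a = 1" by (simp add: Suc_le_eq antisym)
      then show ?thesis using u unfolding atom_pow_def by auto
    next
      case False
      then show ?thesis using u unfolding atom_pow_def by auto
    qed
  qed (use atom_pow_mono[of M M S "insert a S" 1]
      atom_pow_mono[of M "insert a M" "insert a S" "insert a S" 1] in auto)
  ultimately show ?thesis using uconc_single_atom_pow[OF assms] by simp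
qed

lemma lang_Par_sym_reps:
  assumes "distinct (map fst xs)" "\<forall>(a, I)\<in>set xs. I \<in> {I_opt, I_one}"
  shows "lang (Par (map (\<lambda>(a, I). Rep (Sym a) I) xs))
           = atom_pow {a. (a, I_one) \<in> set xs} (fst ` set xs) 1"
  using assms
proof (induction xs)
  case Nil
  show ?case unfolding atom_pow_def by auto
next
  case (Cons p xs)
  obtain a I where p: "p = (a, I)" by (cases p)
  define M where "M = {a. (a, I_one) \<in> set xs}"
  define S where "S = fst ` set xs"
  have "a \<notin> S" "M \<subseteq> S" using Cons.prems(1) unfolding p M_def S_def by force+
  have IH: "lang (Par (map (\<lambda>(a, I). Rep (Sym a) I) xs)) = atom_pow M S 1"
    using Cons unfolding M_def S_def by auto
  have "I = I_one \<or> I = I_opt" using Cons.prems(2) unfolding p by auto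
  then show ?case
  proof
    assume "I = I_one"
    then have "{b. (b, I_one) \<in> set (p # xs)} = insert a M" unfolding p M_def by auto
    then show ?thesis
      using uconc_single_atom_pow[OF \<open>a \<notin> S\<close> \<open>M \<subseteq> S\<close>] IH
      by (simp add: p \<open>I = I_one\<close> rep_lang_I_one S_def)
  next
    assume "I = I_opt"
    then have "{b. (b, I_one) \<in> set (p # xs)} = M"
      using \<open>a \<notin> S\<close> unfolding p M_def S_def by (auto simp: I_opt_def I_one_def)
    then show ?thesis
      using uconc_opt_atom_pow[OF \<open>a \<notin> S\<close> \<open>M \<subseteq> S\<close>] IH
      by (simp add: p \<open>I = I_opt\<close> rep_lang_I_opt S_def insert_commute)
  qed
qed

lemma lang_atom:
  assumes "is_atom A" "distinct (syms A)"
  shows "\<exists>M \<subseteq> set (syms A). lang A = atom_pow M (set (syms A)) 1"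
proof -
  obtain xs where A: "A = Par (map (\<lambda>(a, I). Rep (Sym a) I) xs)"
    and I: "\<forall>(a, I) \<in> set xs. I \<in> {I_opt, I_one}"
    using assms(1) unfolding is_atom_def by blast
  have "syms A = map fst xs" unfolding A by (induction xs) auto
  then show ?thesis
    using lang_Par_sym_reps[OF _ I] assms(2) unfolding A by (intro exI[of _ "{a. (a, I_one) \<in> set xs}"]) force
qed

lemma count_sum_list_le:
  "(\<And>w. w \<in> set ws \<Longrightarrow> count w b \<le> count w a) \<Longrightarrow> count (sum_list ws) b \<le> count (sum_list ws) a"
  by (induction ws) (auto intro: add_mono)

lemma sum_list_cover:
  assumes "finite I"
    and "\<And>i j. i \<in> I \<Longrightarrow> j \<in> I \<Longrightarrow> i \<noteq> j \<Longrightarrow> S i \<inter> S j = {}"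
    and "set_mset v \<subseteq> (\<Union>i\<in>I. S i)"
    and "\<And>i. i \<in> I \<Longrightarrow> \<exists>ws. set ws \<subseteq> G \<and> sum_list ws = restrict (S i) v"
  shows "\<exists>ws. set ws \<subseteq> G \<and> sum_list ws = v"
  using assms
proof (induction I arbitrary: v rule: finite_induct)
  case empty
  then show ?case by (intro exI[of _ "[]"]) auto
next
  case (insert i I)
  define rest where "rest = filter_mset (\<lambda>a. a \<notin> S i) v"
  obtain ws1 where ws1: "set ws1 \<subseteq> G" "sum_list ws1 = restrict (S i) v"
    using insert.prems(3) by blast
  have "restrict (S j) rest = restrict (S j) v" if "j \<in> I" for j
    using insert.prems(1)[of i j] insert.hyps(2) that unfolding rest_def
    by (intro multiset_eqI) auto
  moreover have "set_mset rest \<subseteq> (\<Union>j\<in>I. S j)"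
    using insert.prems(2) unfolding rest_def by auto
  ultimately obtain ws2 where ws2: "set ws2 \<subseteq> G" "sum_list ws2 = rest"
    using insert.IH[of rest] insert.prems(1,3) by auto
  have "v = restrict (S i) v + rest"
    unfolding rest_def by (rule multiset_partition)
  then show ?case using ws1 ws2 by (intro exI[of _ "ws1 @ ws2"]) auto
qed

lemma atom_pow_if_dominated:
  assumes "set_mset v \<subseteq> S" "c \<in> M" "M \<subseteq> S"
    and "\<And>d. d \<in> S \<Longrightarrow> count v d \<le> count v c" "\<And>d. d \<in> M \<Longrightarrow> count v c \<le> count v d"
  shows "v \<in> atom_pow M S (count v c)"
proof -
  have "count v a \<le> count v c" for a
    using assms(1) assms(4)[of a] by (cases "a \<in># v") (auto simp: not_in_iff)
  then show ?thesis using assms by (auto simp: atom_pow_def intro: antisym)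
qed

text \<open>The atoms of a clause, as blocks of mandatory symbols \<open>M i\<close> and symbols \<open>S i\<close>.\<close>

locale disjoint_blocks =
  fixes Ix :: "'i set" and M S :: "'i \<Rightarrow> 'a set"
  assumes disjoint: "\<lbrakk>i \<in> Ix; j \<in> Ix; i \<noteq> j\<rbrakk> \<Longrightarrow> S i \<inter> S j = {}"
    and mandatory_subset: "i \<in> Ix \<Longrightarrow> M i \<subseteq> S i"
begin

lemma block_unique: "\<lbrakk>i \<in> Ix; j \<in> Ix; a \<in> S i; a \<in> S j\<rbrakk> \<Longrightarrow> i = j"
  using disjoint by blast

lemma count_le_mandatory:
  assumes "i \<in> Ix" "c \<in> M i" "d \<in> S i" "j \<in> Ix" "u \<in> atom_pow (M j) (S j) k"
  shows "count u d \<le> count u c"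
proof (cases "j = i")
  case False
  then have "d \<notin> S j" using disjoint assms(1,3,4) by blast
  then have "count u d = 0" using assms(5) unfolding atom_pow_def by (auto simp: count_eq_zero_iff)
  then show ?thesis by simp
qed (use assms in \<open>auto simp: atom_pow_def\<close>)

end

locale clause_lang = disjoint_blocks Ix M S
  for Ix :: "'i set" and M S :: "'i \<Rightarrow> 'a set" +
  fixes L :: "'a uword set" and n :: "'i \<Rightarrow> nat" and m :: "'i \<Rightarrow> enat"
  assumes mem_iff: "u \<noteq> {#} \<Longrightarrow>
    u \<in> L \<longleftrightarrow> (\<exists>i\<in>Ix. \<exists>k. n i \<le> k \<and> enat k \<le> m i \<and> u \<in> atom_pow (M i) (S i) k)"
begin

lemma block_exponent:
  assumes "u \<in> L" "a \<in># u" "i \<in> Ix" "a \<in> S i"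
  obtains k where "n i \<le> k" "enat k \<le> m i" "u \<in> atom_pow (M i) (S i) k"
proof -
  have "u \<noteq> {#}" using assms(2) by auto
  then obtain j k where "j \<in> Ix" "n j \<le> k" "enat k \<le> m j" "u \<in> atom_pow (M j) (S j) k"
    using mem_iff assms(1) by blast
  moreover from this have "j = i" using block_unique assms(2-4) unfolding atom_pow_def by blast
  ultimately show ?thesis using that by blast
qed

lemma count_le_mandatory_lang: "\<lbrakk>u \<in> L; i \<in> Ix; c \<in> M i; d \<in> S i\<rbrakk> \<Longrightarrow> count u d \<le> count u c"
  using mem_iff[of u] count_le_mandatory by (cases "u = {#}") auto

lemma consistent_within_block:
  assumes v: "consistent L v" "v \<noteq> {#}"
  obtains i where "i \<in> Ix" "set_mset v \<subseteq> S i"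
proof -
  have in_block: "\<exists>i\<in>Ix. a \<in> S i \<and> b \<in> S i" if u: "u \<in> L" "a \<in># u" "b \<in># u" for u a b
  proof -
    have "u \<noteq> {#}" using u(2) by auto
    then obtain i k where "i \<in> Ix" "u \<in> atom_pow (M i) (S i) k" using mem_iff u(1) by blast
    then show ?thesis using u(2,3) unfolding atom_pow_def by blast
  qed
  obtain a where "a \<in># v" using v(2) by (meson multiset_nonemptyE)
  then obtain i where i: "i \<in> Ix" "a \<in> S i"
    using in_block consistent_symbol[OF v(1)] by metis
  have "b \<in> S i" if "b \<in># v" for b
    using in_block consistent_cooccur[OF v(1) \<open>a \<in># v\<close> that] block_unique i by metis
  then show ?thesis using i that by blast
qed

lemma consistent_mem_mandatory:
  assumes v: "consistent L v" "v \<noteq> {#}" and i: "i \<in> Ix" "set_mset v \<subseteq> S i" and c: "c \<in> M i"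
  shows "v \<in> L"
proof -
  have "c \<in> S i" using mandatory_subset i(1) c by blast
  have "v \<in> atom_pow (M i) (S i) (count v c)"
  proof (rule atom_pow_if_dominated[OF i(2) c mandatory_subset[OF i(1)]])
    show "count v d \<le> count v c" if "d \<in> S i" for d
      using count_le_mandatory_lang[OF _ i(1) c that] consistent_count_le[OF v(1)] by blast
    show "count v c \<le> count v d" if "d \<in> M i" for d
      using count_le_mandatory_lang[OF _ i(1) that \<open>c \<in> S i\<close>] consistent_count_le[OF v(1)] by blast
  qed
  moreover have "c \<in># v"
  proof (rule ccontr)
    assume "c \<notin># v"
    then have "v \<in> atom_pow (M i) (S i) 0" using calculation by (simp add: not_in_iff)
    with v(2) show False by (simp add: atom_pow_0)
  qed
  \<comment> \<open>the exponent is read off a word of \<open>L\<close> with the same number of \<open>c\<close>'s\<close>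
  then obtain u where u: "u \<in> L" "c \<in># u" "count u c = count v c"
    using consistent_symbol[OF v(1)] by metis
  then obtain k where "n i \<le> k" "enat k \<le> m i" "u \<in> atom_pow (M i) (S i) k"
    using block_exponent[OF u(1,2) i(1) \<open>c \<in> S i\<close>] by blast
  moreover have "k = count v c" using \<open>u \<in> atom_pow (M i) (S i) k\<close> c u(3) unfolding atom_pow_def by auto
  ultimately show ?thesis using mem_iff[OF v(2)] i(1) by blast
qed

lemma consistent_mem_optional:
  assumes v: "consistent L v" "v \<noteq> {#}" and i: "i \<in> Ix" "set_mset v \<subseteq> S i" "M i = {}"
  shows "v \<in> L"
proof -
  \<comment> \<open>use the exponent of a word of \<open>L\<close> matching the largest multiplicity in \<open>v\<close>\<close>
  define K where "K = Max (count v ` set_mset v)"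
  have "K \<in> count v ` set_mset v" unfolding K_def using v(2) by (intro Max_in) auto
  then obtain b where "b \<in># v" "count v b = K" by blast
  then obtain u where u: "u \<in> L" "b \<in># u" "count u b = K"
    using consistent_symbol[OF v(1)] by metis
  then obtain k where k: "n i \<le> k" "enat k \<le> m i" "u \<in> atom_pow (M i) (S i) k"
    using block_exponent[OF u(1,2) i(1)] i(2) \<open>b \<in># v\<close> by blast
  have "count v a \<le> k" for a
  proof -
    have "count v a \<le> K" unfolding K_def by (cases "a \<in># v") (auto simp: not_in_iff)
    also have "K \<le> k" using k(3) u(3) unfolding atom_pow_def by auto
    finally show ?thesis .
  qed
  then have "v \<in> atom_pow (M i) (S i) k" using i(2,3) unfolding atom_pow_def by auto
  then show ?thesis using mem_iff[OF v(2)] k(1,2) i(1) by blast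
qed

lemma consistent_mem:
  assumes v: "consistent L v"
  shows "v \<in> L"
proof (cases "v = {#}")
  case False
  obtain i where i: "i \<in> Ix" "set_mset v \<subseteq> S i" by (rule consistent_within_block[OF v False])
  show ?thesis
  proof (cases "M i = {}")
    case True
    then show ?thesis using consistent_mem_optional[OF v False i] by blast
  next
    case False
    then obtain c where "c \<in> M i" by blast
    then show ?thesis using consistent_mem_mandatory[OF v \<open>v \<noteq> {#}\<close> i] by blast
  qed
qed (use empty_mem_if_consistent v in blast)

end

locale iterated_clause_lang = disjoint_blocks Ix M S
  for Ix :: "'i set" and M S :: "'i \<Rightarrow> 'a set" +
  fixes L :: "'a uword set"
  assumes finite_blocks: "finite Ix"
    and mem_iff: "u \<noteq> {#} \<Longrightarrow>
      u \<in> L \<longleftrightarrow> (\<exists>ws. set ws \<subseteq> (\<Union>i\<in>Ix. atom_pow (M i) (S i) 1) \<and> sum_list ws = u)"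
begin

lemma decompose:
  assumes "u \<in> L" "u \<noteq> {#}"
  obtains ws where "set ws \<subseteq> (\<Union>i\<in>Ix. atom_pow (M i) (S i) 1)" "sum_list ws = u"
  using mem_iff assms that by blast

lemma count_le_mandatory_lang:
  assumes "u \<in> L" "i \<in> Ix" "c \<in> M i" "d \<in> S i"
  shows "count u d \<le> count u c"
proof (cases "u = {#}")
  case False
  then obtain ws where "set ws \<subseteq> (\<Union>i\<in>Ix. atom_pow (M i) (S i) 1)" "sum_list ws = u"
    using decompose assms(1) by blast
  then show ?thesis using count_sum_list_le[of ws d c] count_le_mandatory[OF assms(2-4)] by blast
qed simp

lemma consistent_subset_blocks:
  assumes "consistent L v"
  shows "set_mset v \<subseteq> (\<Union>i\<in>Ix. S i)"
proof
  fix a assume "a \<in># v"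
  then obtain u where "u \<in> L" "a \<in># u" using consistent_symbol[OF assms] by metis
  moreover have "u \<noteq> {#}" using \<open>a \<in># u\<close> by auto
  ultimately obtain ws where "set ws \<subseteq> (\<Union>i\<in>Ix. atom_pow (M i) (S i) 1)" "a \<in># sum_list ws"
    using decompose by metis
  then show "a \<in> (\<Union>i\<in>Ix. S i)" unfolding atom_pow_def by fastforce
qed

lemma consistent_restrict_atom_pow:
  assumes v: "consistent L v" and i: "i \<in> Ix"
  obtains k where "restrict (S i) v \<in> atom_pow (M i) (S i) k"
proof (cases "M i = {}")
  case True
  have "count (restrict (S i) v) a \<le> size v" for a
    using count_le_size[of v a] by simp
  then have "restrict (S i) v \<in> atom_pow (M i) (S i) (size v)"
    using True unfolding atom_pow_def by auto
  then show ?thesis using that by blast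
next
  case False
  then obtain c where c: "c \<in> M i" by blast
  then have "c \<in> S i" using mandatory_subset i by blast
  have "restrict (S i) v \<in> atom_pow (M i) (S i) (count (restrict (S i) v) c)"
  proof (rule atom_pow_if_dominated[OF _ c mandatory_subset[OF i]])
    show "count (restrict (S i) v) d \<le> count (restrict (S i) v) c" if "d \<in> S i" for d
      using count_le_mandatory_lang[OF _ i c that] consistent_count_le[OF v] that \<open>c \<in> S i\<close>
      by simp
    show "count (restrict (S i) v) c \<le> count (restrict (S i) v) d" if "d \<in> M i" for d
      using count_le_mandatory_lang[OF _ i that \<open>c \<in> S i\<close>] consistent_count_le[OF v] that
        \<open>c \<in> S i\<close> mandatory_subset[OF i] by auto
  qed auto
  then show ?thesis using that by blast
qed

lemma consistent_mem:
  assumes v: "consistent L v"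
  shows "v \<in> L"
proof (cases "v = {#}")
  case True
  then show ?thesis using empty_mem_if_consistent v by blast
next
  case False
  \<comment> \<open>each block's share of \<open>v\<close> is a power of its atom, hence a sum of single copies\<close>
  have "\<exists>ws. set ws \<subseteq> (\<Union>i\<in>Ix. atom_pow (M i) (S i) 1) \<and> sum_list ws = restrict (S i) v"
    if i: "i \<in> Ix" for i
  proof -
    obtain k where "restrict (S i) v \<in> atom_pow (M i) (S i) k"
      using consistent_restrict_atom_pow[OF v i] .
    then obtain ws where "set ws \<subseteq> atom_pow (M i) (S i) 1" "sum_list ws = restrict (S i) v"
      using atom_pow_split by blast
    then show ?thesis using i by blast
  qed
  then obtain ws where "set ws \<subseteq> (\<Union>i\<in>Ix. atom_pow (M i) (S i) 1)" "sum_list ws = v"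
    using sum_list_cover[of Ix S v, OF finite_blocks disjoint consistent_subset_blocks[OF v]] by blast
  then show ?thesis using mem_iff[OF False] by blast
qed

end

lemma distinct_concat_map_disjoint:
  "\<lbrakk>distinct (concat (map f xs)); x \<in> set xs; y \<in> set xs; x \<noteq> y\<rbrakk> \<Longrightarrow> set (f x) \<inter> set (f y) = {}"
  by (induction xs) fastforce+

lemma restrict_mem_lang_Par:
  assumes "u \<in> lang (Par Es)" "distinct (concat (map syms Es))" "E \<in> set Es"
  shows "restrict (set (syms E)) u \<in> lang E"
  using assms
proof (induction Es arbitrary: u)
  case (Cons E0 Es)
  then obtain u0 u' where u: "u = u0 + u'" "u0 \<in> lang E0" "u' \<in> lang (Par Es)"
    unfolding lang_Par_Cons uconc_def by blast
  have "set_mset u0 \<subseteq> set (syms E0)" "set_mset u' \<subseteq> set (concat (map syms Es))"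
    using lang_subset_syms u(2,3) by (fastforce simp del: lang.simps)+
  moreover have "set (syms E0) \<inter> set (concat (map syms Es)) = {}" using Cons.prems(2) by simp
  ultimately have restrict_u0: "restrict (set (syms E0)) u = u0"
    and restrict_u': "E \<in> set Es \<Longrightarrow> restrict (set (syms E)) u = restrict (set (syms E)) u'"
    unfolding u(1) by (auto intro!: multiset_eqI simp flip: not_in_iff) blast+
  show ?case
  proof (cases "E = E0")
    case True
    then show ?thesis using restrict_u0 u(2) by simp
  next
    case False
    then have "E \<in> set Es" using Cons.prems(3) by simp
    then show ?thesis using Cons.IH[OF u(3)] Cons.prems(2) restrict_u'[OF \<open>E \<in> set Es\<close>] by simp
  qed
qed simp

lemma mem_lang_ParI:
  assumes "distinct (concat (map syms Es))" "set_mset w \<subseteq> set (concat (map syms Es))"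
    and "\<And>E. E \<in> set Es \<Longrightarrow> restrict (set (syms E)) w \<in> lang E"
  shows "w \<in> lang (Par Es)"
  using assms
proof (induction Es arbitrary: w)
  case (Cons E Es)
  define rest where "rest = filter_mset (\<lambda>a. a \<notin> set (syms E)) w"
  have disj: "set (syms E) \<inter> set (concat (map syms Es)) = {}" using Cons.prems(1) by simp
  have "restrict (set (syms E')) rest = restrict (set (syms E')) w" if "E' \<in> set Es" for E'
    using disj that unfolding rest_def by (auto intro!: multiset_eqI) blast
  then have "rest \<in> lang (Par Es)"
    using Cons.IH[of rest] Cons.prems unfolding rest_def by auto
  moreover have "w = restrict (set (syms E)) w + rest"
    unfolding rest_def by (rule multiset_partition)
  ultimately show ?case using Cons.prems(3) unfolding lang_Par_Cons uconc_def by force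
qed simp

lemma consistent_restrict_Par:
  assumes "consistent (lang (Par Es)) w" "distinct (concat (map syms Es))" "E \<in> set Es"
  shows "consistent (lang E) (restrict (set (syms E)) w)"
  using consistent_restrict[OF assms(1)] restrict_mem_lang_Par[OF _ assms(2,3)] lang_subset_syms
  by blast

lemma lang_Alt_Reps: "lang (Alt (map (\<lambda>(A, I). Rep A I) ys)) = (\<Union>p\<in>set ys. rep_lang (lang (fst p)) (snd p))"
  by (induction ys) auto

lemma syms_Alt_Reps: "syms (Alt (map (\<lambda>(A, I). Rep A I) ys)) = concat (map (\<lambda>p. syms (fst p)) ys)"
  by (induction ys) auto

lemma clause_blocks:
  assumes "\<forall>(A, I)\<in>set ys. is_atom A" "distinct (syms (Alt (map (\<lambda>(A, I). Rep A I) ys)))"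
  obtains M where "disjoint_blocks (set ys) M (\<lambda>p. set (syms (fst p)))"
    and "\<And>p. p \<in> set ys \<Longrightarrow> lang (fst p) = atom_pow (M p) (set (syms (fst p))) 1"
proof -
  have distinct: "distinct (concat (map (\<lambda>p. syms (fst p)) ys))"
    using assms(2) unfolding syms_Alt_Reps .
  have "\<exists>M. M \<subseteq> set (syms (fst p)) \<and> lang (fst p) = atom_pow M (set (syms (fst p))) 1"
    if "p \<in> set ys" for p
  proof (rule lang_atom)
    show "is_atom (fst p)" using assms(1) that by (cases p) auto
    show "distinct (syms (fst p))" using distinct that by (simp add: distinct_concat_iff)
  qed
  then have "\<forall>p\<in>set ys. \<exists>M. M \<subseteq> set (syms (fst p)) \<and> lang (fst p) = atom_pow M (set (syms (fst p))) 1"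
    by blast
  then obtain M where "\<forall>p\<in>set ys. M p \<subseteq> set (syms (fst p)) \<and>
      lang (fst p) = atom_pow (M p) (set (syms (fst p))) 1"
    using bchoice[of "set ys" "\<lambda>p M. M \<subseteq> set (syms (fst p)) \<and>
        lang (fst p) = atom_pow M (set (syms (fst p))) 1"] by blast
  moreover have "disjoint_blocks (set ys) M (\<lambda>p. set (syms (fst p)))"
    using calculation distinct_concat_map_disjoint[OF distinct] by unfold_locales auto
  ultimately show ?thesis using that by blast
qed

lemma consistent_mem_clause_Rep:
  assumes "is_clause D" "I \<in> {I_one, I_opt}" "distinct (syms D)" "consistent (lang (Rep D I)) v"
  shows "v \<in> lang (Rep D I)"
proof -
  obtain ys where D: "D = Alt (map (\<lambda>(A, I). Rep A I) ys)" and atoms: "\<forall>(A, I)\<in>set ys. is_atom A"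
    using assms(1) unfolding is_clause_def by blast
  obtain M where blocks: "disjoint_blocks (set ys) M (\<lambda>p. set (syms (fst p)))"
    and lang_atoms: "\<And>p. p \<in> set ys \<Longrightarrow> lang (fst p) = atom_pow (M p) (set (syms (fst p))) 1"
    using clause_blocks[OF atoms] assms(3) unfolding D by blast
  have lang_Rep: "u \<in> lang (Rep D I) \<longleftrightarrow> u \<in> lang D" if "u \<noteq> {#}" for u
    using assms(2) that by (auto simp: rep_lang_I_one rep_lang_I_opt)
  have lang_rep: "u \<in> rep_lang (lang (fst p)) (snd p) \<longleftrightarrow> (\<exists>k. fst (snd p) \<le> k
      \<and> enat k \<le> fst (snd (snd p)) \<and> u \<in> atom_pow (M p) (set (syms (fst p))) k)"
    if "p \<in> set ys" "u \<noteq> {#}" for p u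
    using that rep_lang_atom_pow[of "M p" "set (syms (fst p))"] lang_atoms[OF that(1)]
    by (cases "snd p") auto
  interpret clause_lang "set ys" M "\<lambda>p. set (syms (fst p))" "lang (Rep D I)"
    "\<lambda>p. fst (snd p)" "\<lambda>p. fst (snd (snd p))"
  proof (intro clause_lang.intro[OF blocks] clause_lang_axioms.intro)
    fix u :: "'a uword" assume "u \<noteq> {#}"
    then show "u \<in> lang (Rep D I) \<longleftrightarrow> (\<exists>p\<in>set ys. \<exists>k. fst (snd p) \<le> k
        \<and> enat k \<le> fst (snd (snd p)) \<and> u \<in> atom_pow (M p) (set (syms (fst p))) k)"
      using lang_Rep lang_rep unfolding D lang_Alt_Reps by blast
  qed
  show ?thesis using consistent_mem assms(4) .
qed

lemma mem_rep_lang_plus_star: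
  assumes "I \<in> {I_plus, I_star}" "G \<subseteq> L" "L \<subseteq> insert {#} G" "u \<noteq> {#}"
  shows "u \<in> rep_lang L I \<longleftrightarrow> (\<exists>ws. set ws \<subseteq> G \<and> sum_list ws = u)"
proof
  assume "u \<in> rep_lang L I"
  then obtain ws where ws: "set ws \<subseteq> L" "sum_list ws = u"
    using assms(1) unfolding rep_lang_def I_plus_def I_star_def by auto
  have "sum_list (filter (\<lambda>w. w \<noteq> {#}) ws) = sum_list ws" by (induction ws) auto
  moreover have "set (filter (\<lambda>w. w \<noteq> {#}) ws) \<subseteq> G" using ws(1) assms(3) by auto
  ultimately show "\<exists>ws. set ws \<subseteq> G \<and> sum_list ws = u" using ws(2) by blast
next
  assume "\<exists>ws. set ws \<subseteq> G \<and> sum_list ws = u"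
  then obtain ws where ws: "set ws \<subseteq> G" "sum_list ws = u" by blast
  then have "1 \<le> length ws" using assms(4) by (cases ws) auto
  then show "u \<in> rep_lang L I"
    using ws assms(1,2) unfolding rep_lang_def I_plus_def I_star_def by (auto intro!: exI[of _ ws])
qed

lemma consistent_mem_simple_clause_Rep:
  assumes "is_simple_clause D" "I \<in> {I_plus, I_star}" "distinct (syms D)"
    "consistent (lang (Rep D I)) v"
  shows "v \<in> lang (Rep D I)"
proof -
  obtain ys where D: "D = Alt (map (\<lambda>(A, I). Rep A I) ys)"
    and atoms: "\<forall>(A, J)\<in>set ys. is_atom A \<and> J \<in> {I_opt, I_one}"
    using assms(1) unfolding is_simple_clause_def by blast
  then have "\<forall>(A, J)\<in>set ys. is_atom A" by auto
  then obtain M where blocks: "disjoint_blocks (set ys) M (\<lambda>p. set (syms (fst p)))"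
    and lang_atoms: "\<And>p. p \<in> set ys \<Longrightarrow> lang (fst p) = atom_pow (M p) (set (syms (fst p))) 1"
    using clause_blocks assms(3) unfolding D by blast
  define G where "G = (\<Union>p\<in>set ys. atom_pow (M p) (set (syms (fst p))) 1)"
  have "atom_pow (M p) (set (syms (fst p))) 1 \<subseteq> rep_lang (lang (fst p)) (snd p)"
    "rep_lang (lang (fst p)) (snd p) \<subseteq> insert {#} (atom_pow (M p) (set (syms (fst p))) 1)"
    if "p \<in> set ys" for p
  proof -
    have "snd p \<in> {I_opt, I_one}" using atoms that by auto
    then show "atom_pow (M p) (set (syms (fst p))) 1 \<subseteq> rep_lang (lang (fst p)) (snd p)"
      "rep_lang (lang (fst p)) (snd p) \<subseteq> insert {#} (atom_pow (M p) (set (syms (fst p))) 1)"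
      using lang_atoms[OF that] by (auto simp: rep_lang_I_one rep_lang_I_opt)
  qed
  then have "G \<subseteq> lang D" "lang D \<subseteq> insert {#} G"
    unfolding D lang_Alt_Reps G_def by blast+
  note lang_Rep = mem_rep_lang_plus_star[OF assms(2) this]
  interpret iterated_clause_lang "set ys" M "\<lambda>p. set (syms (fst p))" "lang (Rep D I)"
  proof (intro iterated_clause_lang.intro[OF blocks] iterated_clause_lang_axioms.intro)
    fix u :: "'a uword" assume "u \<noteq> {#}"
    then show "u \<in> lang (Rep D I) \<longleftrightarrow>
        (\<exists>ws. set ws \<subseteq> (\<Union>p\<in>set ys. atom_pow (M p) (set (syms (fst p))) 1) \<and> sum_list ws = u)"
      using lang_Rep unfolding G_def by simp
  qed simp
  show ?thesis using consistent_mem assms(4) .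
qed

lemma consistent_mem_DIME:
  assumes "is_DIME E" "consistent (lang E) w"
  shows "w \<in> lang E"
proof -
  obtain xs where E: "E = Par (map (\<lambda>(D, I). Rep D I) xs)"
    and components: "\<forall>(D, I) \<in> set xs. (is_simple_clause D \<and> I \<in> {I_plus, I_star})
                                   \<or> (is_clause D \<and> I \<in> {I_one, I_opt})"
    and distinct: "distinct (syms E)"
    using assms(1) unfolding is_DIME_def by blast
  define Es where "Es = map (\<lambda>(D, I). Rep D I) xs"
  have distinct_Es: "distinct (concat (map syms Es))" using distinct unfolding E Es_def by simp
  show ?thesis unfolding E Es_def[symmetric]
  proof (rule mem_lang_ParI[OF distinct_Es])
    show "set_mset w \<subseteq> set (concat (map syms Es))"
      using consistent_subset_syms[OF assms(2)] unfolding E Es_def by simp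
  next
    fix E' assume "E' \<in> set Es"
    then obtain D I where DI: "(D, I) \<in> set xs" "E' = Rep D I" unfolding Es_def by auto
    have "distinct (syms E')"
      using distinct_Es \<open>E' \<in> set Es\<close> by (simp add: distinct_concat_iff)
    then have "distinct (syms D)" using DI(2) by simp
    moreover have "consistent (lang (Rep D I)) (restrict (set (syms E')) w)"
      using consistent_restrict_Par[OF _ distinct_Es \<open>E' \<in> set Es\<close>] assms(2) DI(2)
      unfolding E Es_def by simp
    ultimately show "restrict (set (syms E')) w \<in> lang E'"
      using components DI consistent_mem_clause_Rep consistent_mem_simple_clause_Rep by blast
  qed
qed

theorem lemma2:
  fixes E E' :: "('a::finite) expr"
  assumes "is_DIME E" and "is_DIME E'"
  shows "lang E' \<subseteq> lang E \<longleftrightarrow> delta_le (Delta E') (Delta E)"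
proof
  assume "lang E' \<subseteq> lang E"
  then show "delta_le (Delta E') (Delta E)"
    unfolding delta_le_def Delta_def C_of_def N_of_def P_of_def K_of_def by blast
next
  assume "delta_le (Delta E') (Delta E)"
  then show "lang E' \<subseteq> lang E"
    using consistent_if_mem consistent_if_delta_le consistent_mem_DIME[OF assms(1)] by blast
qed

end
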